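(* Let $g_0\neq 0$ and let $s_0\in\mathbb{Z}_{\ge0}^{G^+}$ be given by $s_0(g_0)=1$ and $s_0(g)=0$ for $g\in G^+$, $g\neq g_0$. Then $s_0$ is a vertex of $P(G,g_0)$ and it is adjacent to every other vertex of $P(G,g_0)$.
   Context: Let $G$ be a finite abelian group of order $D$ with zero element $0$, and let $G^+=G\setminus\{0\}$. For $g_0\in G$, let $T(G,g_0)$ be the set of vectors $t=(t(g))_{g\in G^+}\in\mathbb{Z}_{\ge 0}^{G^+}$ with $\sum_{g\in G^+}t(g)g=g_0$ (sum computed in $G$). The master corner polyhedron is $P(G,g_0)=\mathrm{conv}\,T(G,g_0)\subset\mathbb{R}^{G^+}$. Two vertices are adjacent if the segment joining them is an edge (one-dimensional face) of $P(G,g_0)$. *)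

theory Defs
  imports "HOL-Analysis.Analysis"
begin

text \<open>The finite abelian group G is the finite type 'a (class ab_group_add, finite).
  A vector in R^(G^+) is represented as an element t of real^'a with t$0 = 0.\<close>

primrec natmul :: "nat \<Rightarrow> 'a::monoid_add \<Rightarrow> 'a" where
  "natmul 0 g = 0"
| "natmul (Suc n) g = g + natmul n g"

definition corner_points :: "'a::{ab_group_add,finite} \<Rightarrow> (real^'a::{ab_group_add,finite}) set" where
  "corner_points g0 = {t :: real^_. t $ 0 = 0 \<and> (\<forall>g. t $ g \<in> \<nat>) \<and>
      (\<Sum>g\<in>UNIV - {0}. natmul (nat \<lfloor>t $ g\<rfloor>) g) = g0}"

definition master_corner :: "'a::{ab_group_add,finite} \<Rightarrow> (real^'a::{ab_group_add,finite}) set" where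
  "master_corner g0 = convex hull (corner_points g0)"

definition unit_at :: "'a::finite \<Rightarrow> real^'a" where
  "unit_at g0 = (\<chi> g. if g = g0 then 1 else 0)"

definition adjacent_vertices :: "(real^'a::finite) set \<Rightarrow> real^'a \<Rightarrow> real^'a \<Rightarrow> bool" where
  "adjacent_vertices P u v \<longleftrightarrow> u extreme_point_of P \<and> v extreme_point_of P \<and>
      closed_segment u v face_of P \<and> aff_dim (closed_segment u v) = 1"

end

theory Submission
  imports Defs
begin

(* Let P = conv T be the master corner polyhedron, s0 the unit vector at g0 \<noteq> 0.
   The proof rests on three properties of P:
   (1) P is closed upwards in every direction e_g, g \<noteq> 0: since some positive
       multiple of g vanishes in G, adding that multiple of e_g maps T into T.
   (2) P lies in the region {q \<ge> 0, q(0) = 0, \<Sigma> q \<ge> 1}; on it the linear form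
       2 \<Sigma> q - q(g0) is at least 1 with equality only at s0, so s0 is a vertex.
       By (1), a vertex v is minimal in P, hence every vertex v \<noteq> s0 has v(g0) = 0.
   (3) T splits into points with t(g0) = 0 and points with t \<ge> s0, so every point
       of P is a convex combination of a point of P in {q(g0) = 0} and a point of
       P above s0.
   For a vertex v \<noteq> s0, a point of the segment [s0, v] has exactly one such
   representation (lemma segment_point_split).  Combined with extremality of s0 and
   v this shows that [s0, v] is a face of P, which gives the theorem. *)

section \<open>Multiples in a finite group\<close>

lemma natmul_add: "natmul (m + n) g = natmul m g + (natmul n g :: 'a::monoid_add)"
  by (induction m) (simp_all add: add.assoc)

lemma natmul_mult_zero: "natmul m g = (0::'a::monoid_add) \<Longrightarrow> natmul (m * k) g = 0"
  by (induction k) (simp_all add: natmul_add)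

text \<open>Every element of a finite group has a positive multiple equal to zero
  (pigeonhole on the multiples \<open>0, g, \<dots>, CARD('a) g\<close>).\<close>

lemma natmul_period: "\<exists>m>0. natmul m (g::'a::{ab_group_add,finite}) = 0"
proof -
  have "\<not> inj_on (\<lambda>n. natmul n g) {..CARD('a)}"
  proof
    assume "inj_on (\<lambda>n. natmul n g) {..CARD('a)}"
    then have "card {..CARD('a)} \<le> card (UNIV::'a set)"
      by (rule card_inj_on_le) auto
    then show False by simp
  qed
  then obtain i j where ij: "i < j" "natmul i g = natmul j g"
    unfolding inj_on_def by (metis linorder_neqE_nat)
  then have "natmul (j - i) g + natmul i g = natmul i g"
    using natmul_add[of "j - i" i g] by simp
  then show ?thesis using ij(1) by (intro exI[of _ "j - i"]) simp
qed

lemma extreme_point_weighted: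
  assumes e: "e extreme_point_of S" and a: "a \<in> S" and b: "b \<in> S"
    and c: "0 < c" and d: "0 \<le> d" and eq: "c *\<^sub>R a + d *\<^sub>R b = (c + d) *\<^sub>R e"
  shows "a = e"
proof (rule ccontr)
  assume "a \<noteq> e"
  define t where "t = d / (c + d)"
  have cd: "0 < c + d" using c d by simp
  have t_weights: "(c + d) * (1 - t) = c" "(c + d) * t = d"
    using cd by (simp_all add: t_def field_simps)
  have "(c + d) *\<^sub>R ((1 - t) *\<^sub>R a + t *\<^sub>R b) = (c + d) *\<^sub>R e"
    using eq t_weights by (simp add: scaleR_add_right)
  then have e_comb: "e = (1 - t) *\<^sub>R a + t *\<^sub>R b" using cd by simp
  have "a \<noteq> b" using \<open>a \<noteq> e\<close> e_comb by (auto simp flip: scaleR_add_left)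
  moreover have "t \<noteq> 0" using e_comb \<open>a \<noteq> e\<close> by auto
  then have "0 < t" using c d unfolding t_def by simp
  moreover have "t < 1" using c d unfolding t_def by simp
  ultimately have "e \<in> open_segment a b" using e_comb unfolding in_segment by blast
  then show False using e a b by (auto simp: extreme_point_of_def)
qed

lemma convex_weighted_point:
  assumes S: "convex S" and a: "a \<in> S" and b: "b \<in> S" and c: "0 \<le> c" and d: "0 \<le> d"
  shows "\<exists>y\<in>S. c *\<^sub>R a + d *\<^sub>R b = (c + d) *\<^sub>R y"
proof (cases "c + d = 0")
  case True
  then have "c = 0" "d = 0" using c d by linarith+
  then show ?thesis using a by (intro bexI[of _ a]) auto
next
  case False
  then have pos: "0 < c + d" using c d by simp
  let ?y = "(c / (c + d)) *\<^sub>R a + (d / (c + d)) *\<^sub>R b"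
  have "?y \<in> S"
    using convexD[OF S a b, of "c / (c + d)" "d / (c + d)"] c d pos
    by (simp add: add_divide_distrib[symmetric])
  moreover have "c *\<^sub>R a + d *\<^sub>R b = (c + d) *\<^sub>R ?y"
    using pos by (simp add: scaleR_add_right)
  ultimately show ?thesis by blast
qed

lemma convex_coordinate_lower_bounds: "convex {q::real^'n. \<forall>g. l g \<le> q$g}"
proof -
  have "{q::real^'n. \<forall>g. l g \<le> q$g} = (\<Inter>g. {q. l g \<le> axis g 1 \<bullet> q})"
    by (auto simp: inner_axis')
  then show ?thesis by (simp add: convex_INT convex_halfspace_ge)
qed

lemma convex_coordinate_hyperplane: "convex {q::real^'n. q$i = (c::real)}"
proof -
  have "{q::real^'n. q$i = c} = {q. axis i 1 \<bullet> q = c}"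
    by (simp add: cart_eq_inner_axis inner_commute)
  then show ?thesis by (simp add: convex_hyperplane)
qed

lemma convex_coordinate_sum_ge: "convex {q::real^'n. b \<le> (\<Sum>g\<in>UNIV. q$g)}"
  using convex_halfspace_ge[of b "1::real^'n"] by (simp add: inner_vec_def)

section \<open>The master corner polyhedron\<close>

lemma unit_at_nth [simp]: "unit_at g $ h = (if h = g then 1 else 0)"
  by (simp add: unit_at_def)

definition lower_part :: "'a::{ab_group_add,finite} \<Rightarrow> (real^'a::{ab_group_add,finite}) set" where
  "lower_part g0 = master_corner g0 \<inter> {q. q $ g0 = 0}"

definition upper_part :: "'a::{ab_group_add,finite} \<Rightarrow> (real^'a::{ab_group_add,finite}) set" where
  "upper_part g0 = master_corner g0 \<inter> {q. \<forall>g. unit_at g0 $ g \<le> q $ g}"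

context
  fixes g0 :: "'a::{ab_group_add,finite}"
  assumes g0: "g0 \<noteq> 0"
begin

lemma corner_pointsD:
  assumes "t \<in> corner_points g0"
  shows "t$0 = 0" "t$g \<in> \<nat>" "0 \<le> t$g"
    "(\<Sum>g\<in>UNIV - {0}. natmul (nat \<lfloor>t $ g\<rfloor>) g) = g0"
proof -
  show "t$0 = 0" "t$g \<in> \<nat>" "(\<Sum>g\<in>UNIV - {0}. natmul (nat \<lfloor>t $ g\<rfloor>) g) = g0"
    using assms by (auto simp: corner_points_def)
  then show "0 \<le> t$g" by (auto elim: Nats_cases)
qed

lemma corner_points_nonzero: "t \<in> corner_points g0 \<Longrightarrow> t \<noteq> 0"
  using corner_pointsD(4)[of t] g0 by auto

lemma corner_points_coord_ge_1:
  assumes "t \<in> corner_points g0" "t$g \<noteq> 0"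
  shows "1 \<le> t$g"
  using corner_pointsD(2)[OF assms(1), of g] assms(2) by (auto elim: Nats_cases)

lemma unit_at_corner_point: "unit_at g0 \<in> corner_points g0"
proof -
  have "(\<Sum>g\<in>UNIV - {0}. natmul (nat \<lfloor>unit_at g0 $ g\<rfloor>) g)
      = (\<Sum>g\<in>UNIV - {0}. if g = g0 then g0 else 0)"
    by (rule sum.cong) auto
  also have "\<dots> = g0" using g0 by simp
  finally show ?thesis using g0 by (auto simp: corner_points_def)
qed

lemma unit_at_master_corner: "unit_at g0 \<in> master_corner g0"
  using unit_at_corner_point unfolding master_corner_def by (simp add: hull_inc)

lemma convex_master_corner: "convex (master_corner g0)"
  unfolding master_corner_def by simp

lemma corner_points_shift:
  assumes t: "t \<in> corner_points g0" and g: "g \<noteq> 0" and m: "natmul m g = 0"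
  shows "t + real m *\<^sub>R unit_at g \<in> corner_points g0"
proof -
  let ?t' = "t + real m *\<^sub>R unit_at g"
  obtain n where n: "t$g = real n" using corner_pointsD(2)[OF t, of g] by (auto elim: Nats_cases)
  have "natmul (nat \<lfloor>?t' $ h\<rfloor>) h = natmul (nat \<lfloor>t $ h\<rfloor>) h" for h
  proof (cases "h = g")
    case True
    then have "?t' $ h = real (n + m)" using n by simp
    then have "nat \<lfloor>?t' $ h\<rfloor> = n + m" by (simp only: floor_of_nat nat_int)
    then show ?thesis using True n m by (simp add: natmul_add)
  qed simp
  then have "(\<Sum>h\<in>UNIV - {0}. natmul (nat \<lfloor>?t' $ h\<rfloor>) h) = g0"
    using corner_pointsD(4)[OF t] by simp
  moreover have "?t' $ h \<in> \<nat>" for h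
    using corner_pointsD(2)[OF t, of h] by (auto intro: Nats_add)
  ultimately show ?thesis using corner_pointsD(1)[OF t] g
    unfolding corner_points_def by auto
qed

lemma master_corner_shift:
  assumes p: "p \<in> master_corner g0" and g: "g \<noteq> 0" and r: "0 \<le> r"
  shows "p + r *\<^sub>R unit_at g \<in> master_corner g0"
proof -
  obtain m where m: "m > 0" "natmul m g = 0" using natmul_period by blast
  define k where "k = nat \<lceil>r\<rceil> + 1"
  define M where "M = real (m * k)"
  have rM: "r < M" and Mpos: "0 < M"
  proof -
    have "r < real k" unfolding k_def by linarith
    also have "\<dots> \<le> M" unfolding M_def of_nat_le_iff using m(1) by simp
    finally show "r < M" .
    then show "0 < M" using r by linarith
  qed
  let ?w = "M *\<^sub>R unit_at g"
  have "(\<lambda>x. ?w + x) ` corner_points g0 \<subseteq> corner_points g0"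
    using corner_points_shift[OF _ g natmul_mult_zero[OF m(2)]] unfolding M_def
    by (auto simp: add.commute)
  then have "convex hull ((\<lambda>x. ?w + x) ` corner_points g0) \<subseteq> master_corner g0"
    unfolding master_corner_def by (rule hull_mono)
  then have pw: "p + ?w \<in> master_corner g0"
    using p unfolding master_corner_def convex_hull_translation by (auto simp: add.commute)
  have "(1 - r/M) *\<^sub>R p + (r/M) *\<^sub>R (p + ?w) \<in> master_corner g0"
    using convexD[OF convex_master_corner p pw, of "1 - r/M" "r/M"] rM Mpos r by simp
  moreover have "(1 - r/M) *\<^sub>R p + (r/M) *\<^sub>R (p + ?w) = p + r *\<^sub>R unit_at g"
    using Mpos by (simp add: algebra_simps)
  ultimately show ?thesis by simp
qed

lemma master_corner_upward:
  assumes p: "p \<in> master_corner g0" and d: "\<forall>g. 0 \<le> d$g" "d$0 = 0"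
  shows "p + d \<in> master_corner g0"
proof -
  have partial: "A \<subseteq> UNIV - {0} \<Longrightarrow> p + (\<Sum>g\<in>A. d$g *\<^sub>R unit_at g) \<in> master_corner g0"
    for A
  proof (induction A rule: finite_induct[OF finite])
    case 1 then show ?case using p by simp
  next
    case (2 x F)
    then have "p + (\<Sum>g\<in>F. d$g *\<^sub>R unit_at g) + d$x *\<^sub>R unit_at x \<in> master_corner g0"
      using d by (intro master_corner_shift) auto
    then show ?case using 2 by (simp add: algebra_simps)
  qed
  have "(\<Sum>g\<in>UNIV - {0}. d$g *\<^sub>R unit_at g) = d"
    unfolding vec_eq_iff
  proof
    fix h :: 'a
    have "(\<Sum>g\<in>UNIV - {0}. d$g *\<^sub>R unit_at g) $ h = (\<Sum>g\<in>UNIV - {0}. if h = g then d$h else 0)"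
      unfolding sum_component by (rule sum.cong) auto
    also have "\<dots> = d$h" using d by simp
    finally show "(\<Sum>g\<in>UNIV - {0}. d$g *\<^sub>R unit_at g) $ h = d$h" .
  qed
  then show ?thesis using partial[of "UNIV - {0}"] by simp
qed

lemma master_corner_bounds:
  assumes p: "p \<in> master_corner g0"
  shows "0 \<le> p$g" "p$0 = 0" "1 \<le> (\<Sum>g\<in>UNIV. p$g)"
proof -
  let ?K = "{q::real^'a::{ab_group_add,finite}. \<forall>g. 0 \<le> q$g} \<inter> {q. q$0 = 0}
    \<inter> {q. 1 \<le> (\<Sum>g\<in>UNIV. q$g)}"
  have "1 \<le> (\<Sum>g\<in>UNIV. t$g)" if t: "t \<in> corner_points g0" for t
  proof -
    obtain h where "t$h \<noteq> 0" using corner_points_nonzero[OF t] by (auto simp: vec_eq_iff)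
    then have "1 \<le> t$h" by (rule corner_points_coord_ge_1[OF t])
    also have "t$h \<le> (\<Sum>g\<in>UNIV. t$g)"
      by (rule member_le_sum) (use corner_pointsD(3)[OF t] in auto)
    finally show ?thesis .
  qed
  then have "corner_points g0 \<subseteq> ?K" using corner_pointsD by auto
  moreover have "convex ?K"
    using convex_coordinate_lower_bounds[of "\<lambda>_. 0"]
    by (intro convex_Int convex_coordinate_hyperplane convex_coordinate_sum_ge)
  ultimately have "master_corner g0 \<subseteq> ?K" unfolding master_corner_def by (rule hull_minimal)
  then show "0 \<le> p$g" "p$0 = 0" "1 \<le> (\<Sum>g\<in>UNIV. p$g)" using p by auto
qed

text \<open>\<open>unit_at g0\<close> is the unique minimiser on P of the linear form
  \<open>2 \<Sigma> q - q(g0)\<close>, whose minimum value is 1; hence it is a vertex.\<close>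

lemma unit_at_extreme: "unit_at g0 extreme_point_of master_corner g0"
proof (rule extreme_point_of_Int_supporting_hyperplane_ge)
  let ?w = "\<chi> g. if g = g0 then 1 else (2::real)"
  have form: "?w \<bullet> q = 2 * (\<Sum>g\<in>UNIV. q$g) - q$g0" for q :: "real^'a::{ab_group_add,finite}"
  proof -
    have "?w \<bullet> q = (\<Sum>g\<in>UNIV. 2 * q$g - (if g = g0 then q$g else 0))"
      unfolding inner_vec_def by (rule sum.cong) auto
    then show ?thesis by (simp add: sum_subtractf sum_distrib_left)
  qed
  have split: "(\<Sum>g\<in>UNIV. q$g) = q$g0 + (\<Sum>g\<in>UNIV - {g0}. q$g)"
    for q :: "real^'a::{ab_group_add,finite}"
    by (simp add: sum.remove)
  have rest: "0 \<le> (\<Sum>g\<in>UNIV - {g0}. q$g)" if "q \<in> master_corner g0" for q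
    using master_corner_bounds(1)[OF that] by (simp add: sum_nonneg)
  show "?w \<bullet> q \<ge> 1" if q: "q \<in> master_corner g0" for q
    using form[of q] split[of q] rest[OF q] master_corner_bounds(3)[OF q] by linarith
  show "master_corner g0 \<inter> {q. ?w \<bullet> q = 1} = {unit_at g0}"
  proof (intro equalityI subsetI)
    fix q assume "q \<in> master_corner g0 \<inter> {q. ?w \<bullet> q = 1}"
    then have q: "q \<in> master_corner g0" and eq: "?w \<bullet> q = 1" by auto
    have zero: "(\<Sum>g\<in>UNIV - {g0}. q$g) = 0" and one: "q$g0 = 1"
      using form[of q] split[of q] rest[OF q] master_corner_bounds(3)[OF q] eq by linarith+
    have "q$g = 0" if "g \<noteq> g0" for g
      using zero that master_corner_bounds(1)[OF q] by (simp add: sum_nonneg_eq_0_iff)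
    then have "q = unit_at g0" using one by (auto simp: vec_eq_iff)
    then show "q \<in> {unit_at g0}" by simp
  next
    fix q assume "q \<in> {unit_at g0}"
    then have "q = unit_at g0" by simp
    moreover have "?w \<bullet> unit_at g0 = 1" unfolding form by simp
    ultimately show "q \<in> master_corner g0 \<inter> {q. ?w \<bullet> q = 1}"
      using unit_at_master_corner by simp
  qed
qed

text \<open>By upward closedness, no point of P lies strictly below a vertex.\<close>

lemma vertex_minimal:
  assumes v: "v extreme_point_of master_corner g0" and p: "p \<in> master_corner g0"
    and le: "\<forall>g. p$g \<le> v$g"
  shows "p = v"
proof -
  have vP: "v \<in> master_corner g0" using v by (simp add: extreme_point_of_def)
  have q: "p + 2 *\<^sub>R (v - p) \<in> master_corner g0"
    using le master_corner_bounds(2)[OF p] master_corner_bounds(2)[OF vP]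
    by (intro master_corner_upward[OF p]) auto
  have mid: "1 *\<^sub>R p + 1 *\<^sub>R (p + 2 *\<^sub>R (v - p)) = (1 + 1) *\<^sub>R v"
    by (simp add: vec_eq_iff algebra_simps)
  show ?thesis by (rule extreme_point_weighted[OF v p q _ _ mid]) simp_all
qed

lemma vertex_facts:
  assumes v: "v extreme_point_of master_corner g0" and ne: "v \<noteq> unit_at g0"
  shows "v \<in> corner_points g0" "v$g0 = 0" "\<exists>h. h \<noteq> g0 \<and> 0 < v$h"
proof -
  show vT: "v \<in> corner_points g0"
    using v unfolding master_corner_def by (rule extreme_point_of_convex_hull)
  show v0: "v$g0 = 0"
  proof (rule ccontr)
    assume "v$g0 \<noteq> 0"
    then have "1 \<le> v$g0" by (rule corner_points_coord_ge_1[OF vT])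
    then have "\<forall>g. unit_at g0 $ g \<le> v$g" using corner_pointsD(3)[OF vT] by auto
    then have "unit_at g0 = v" by (rule vertex_minimal[OF v unit_at_master_corner])
    then show False using ne by simp
  qed
  obtain h where "v$h \<noteq> 0" using corner_points_nonzero[OF vT] by (auto simp: vec_eq_iff)
  then show "\<exists>h. h \<noteq> g0 \<and> 0 < v$h" using v0 corner_pointsD(3)[OF vT, of h]
    by (intro exI[of _ h]) auto
qed

lemma convex_lower_part: "convex (lower_part g0)"
  unfolding lower_part_def
  by (intro convex_Int convex_master_corner convex_coordinate_hyperplane)

lemma convex_upper_part: "convex (upper_part g0)"
  unfolding upper_part_def
  by (intro convex_Int convex_master_corner convex_coordinate_lower_bounds)

lemma master_corner_split:
  assumes low: "lower_part g0 \<noteq> {}" and p: "p \<in> master_corner g0"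
  shows "\<exists>\<alpha> q0 q1. 0 \<le> \<alpha> \<and> \<alpha> \<le> 1 \<and> q0 \<in> lower_part g0 \<and> q1 \<in> upper_part g0
     \<and> p = (1 - \<alpha>) *\<^sub>R q0 + \<alpha> *\<^sub>R q1"
proof -
  have "corner_points g0 \<subseteq> lower_part g0 \<union> upper_part g0"
  proof
    fix t assume t: "t \<in> corner_points g0"
    then have tP: "t \<in> master_corner g0" unfolding master_corner_def by (simp add: hull_inc)
    show "t \<in> lower_part g0 \<union> upper_part g0"
    proof (cases "t$g0 = 0")
      case True then show ?thesis using tP by (simp add: lower_part_def)
    next
      case False
      then have "1 \<le> t$g0" by (rule corner_points_coord_ge_1[OF t])
      then show ?thesis using tP corner_pointsD(3)[OF t] by (simp add: upper_part_def)
    qed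
  qed
  then have "master_corner g0 \<subseteq> convex hull (lower_part g0 \<union> upper_part g0)"
    unfolding master_corner_def by (rule hull_mono)
  also have "\<dots> = {u *\<^sub>R s + w *\<^sub>R t | u w s t. u \<ge> 0 \<and> w \<ge> 0 \<and> u + w = 1
                     \<and> s \<in> lower_part g0 \<and> t \<in> upper_part g0}"
  proof (rule convex_hull_union_two)
    show "convex (lower_part g0)" "convex (upper_part g0)"
      by (rule convex_lower_part convex_upper_part)+
    show "upper_part g0 \<noteq> {}"
      using unit_at_master_corner by (auto simp: upper_part_def)
  qed (rule low)
  finally obtain u w s t where "p = u *\<^sub>R s + w *\<^sub>R t" "0 \<le> u" "0 \<le> w" "u + w = 1"
      "s \<in> lower_part g0" "t \<in> upper_part g0"
    using p by blast
  then show ?thesis by (intro exI[of _ w] exI[of _ s] exI[of _ t]) auto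
qed

lemma segment_point_split:
  assumes v: "v extreme_point_of master_corner g0" and ne: "v \<noteq> unit_at g0"
    and u: "0 < u" and s: "s \<le> 1"
    and y0: "y0 \<in> lower_part g0" and y1: "y1 \<in> upper_part g0"
    and eq: "(1 - u) *\<^sub>R unit_at g0 + u *\<^sub>R v = s *\<^sub>R y0 + (1 - s) *\<^sub>R y1"
  shows "s = u" "y0 = v" "s < 1 \<Longrightarrow> y1 = unit_at g0"
proof -
  have v0: "v$g0 = 0" using vertex_facts[OF v ne] by simp
  obtain h where h: "h \<noteq> g0" "0 < v$h" using vertex_facts[OF v ne] by blast
  have y0P: "y0 \<in> master_corner g0" and y00: "y0$g0 = 0" using y0 by (auto simp: lower_part_def)
  have y1P: "y1 \<in> master_corner g0" and y1s: "\<And>g. unit_at g0 $ g \<le> y1$g"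
    using y1 by (auto simp: upper_part_def)
  have y1g0: "1 \<le> y1$g0" using y1s[of g0] by simp
  have y1nn: "0 \<le> y1$g" for g using master_corner_bounds(1)[OF y1P] .
  have coord: "(if g = g0 then 1 - u else 0) + u * v$g = s * y0$g + (1 - s) * y1$g" for g
    using arg_cong[OF eq, of "\<lambda>x. x$g"] by (cases "g = g0") simp_all
  have "1 - u = (1 - s) * y1$g0" using coord[of g0] v0 y00 by simp
  also have "\<dots> \<ge> 1 - s" using y1g0 s by (simp add: mult_le_cancel_left1)
  finally have us: "u \<le> s" by simp
  have off_g0: "s * y0$g + (1 - s) * y1$g = u * v$g" if "g \<noteq> g0" for g
    using coord[of g] that by simp
  have "y0$g \<le> v$g" for g
  proof (cases "g = g0")
    case False
    have "0 \<le> (1 - s) * y1$g" using y1nn[of g] s by simp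
    then have "s * y0$g \<le> u * v$g" using off_g0[OF False] by linarith
    also have "\<dots> \<le> s * v$g"
      using us master_corner_bounds(1)[of v g] v by (simp add: mult_right_mono extreme_point_of_def)
    finally show ?thesis using us u by simp
  qed (simp add: v0 y00)
  then show y0v: "y0 = v" using vertex_minimal[OF v y0P] by blast
  have "0 \<le> (1 - s) * y1$h" using y1nn[of h] s by simp
  moreover have "s * v$h + (1 - s) * y1$h = u * v$h" using off_g0[OF h(1)] y0v by simp
  ultimately have "s * v$h \<le> u * v$h" by linarith
  then show su: "s = u" using us h(2) by simp
  assume "s < 1"
  have "(1 - s) * y1$g = (1 - s) * unit_at g0 $ g" for g
    using coord[of g] su y0v v0 by (cases "g = g0") (auto simp: algebra_simps)
  then show "y1 = unit_at g0" using \<open>s < 1\<close> by (simp add: vec_eq_iff)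
qed

text \<open>If a point of the segment \<open>[unit_at g0, v]\<close> lies strictly between \<open>a, b \<in> P\<close>,
  then \<open>a\<close> lies on the segment: by uniqueness, the lower and upper halves of the
  decomposition (3) of \<open>a\<close> are forced to be \<open>v\<close> and \<open>unit_at g0\<close>.\<close>

lemma segment_absorbs:
  assumes v: "v extreme_point_of master_corner g0" and ne: "v \<noteq> unit_at g0"
    and a: "a \<in> master_corner g0" and b: "b \<in> master_corner g0"
    and x_seg: "x \<in> closed_segment (unit_at g0) v" and x_ab: "x \<in> open_segment a b"
  shows "a \<in> closed_segment (unit_at g0) v"
proof -
  have v_low: "v \<in> lower_part g0"
    using v vertex_facts[OF v ne] by (simp add: lower_part_def extreme_point_of_def)
  obtain u where u: "0 \<le> u" "u \<le> 1" and xu: "x = (1 - u) *\<^sub>R unit_at g0 + u *\<^sub>R v"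
    using x_seg by (auto simp: in_segment)
  obtain \<theta> where \<theta>: "0 < \<theta>" "\<theta> < 1" and x\<theta>: "x = (1 - \<theta>) *\<^sub>R a + \<theta> *\<^sub>R b"
    using x_ab by (auto simp: in_segment)
  have "u \<noteq> 0"
  proof
    assume "u = 0"
    then have "x = unit_at g0" using xu by simp
    then show False using unit_at_extreme a b x_ab by (auto simp: extreme_point_of_def)
  qed
  with u have u_pos: "0 < u" by simp
  obtain \<alpha> a0 a1 where \<alpha>: "0 \<le> \<alpha>" "\<alpha> \<le> 1" and a0: "a0 \<in> lower_part g0"
    and a1: "a1 \<in> upper_part g0" and a_split: "a = (1 - \<alpha>) *\<^sub>R a0 + \<alpha> *\<^sub>R a1"
    using master_corner_split[OF _ a] v_low by blast
  obtain \<beta> b0 b1 where \<beta>: "0 \<le> \<beta>" "\<beta> \<le> 1" and b0: "b0 \<in> lower_part g0"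
    and b1: "b1 \<in> upper_part g0" and b_split: "b = (1 - \<beta>) *\<^sub>R b0 + \<beta> *\<^sub>R b1"
    using master_corner_split[OF _ b] v_low by blast
  have in_P: "a0 \<in> master_corner g0" "b0 \<in> master_corner g0"
    "a1 \<in> master_corner g0" "b1 \<in> master_corner g0"
    using a0 b0 a1 b1 by (auto simp: lower_part_def upper_part_def)
  text \<open>Regroup \<open>x\<close> into its lower and upper contributions.\<close>
  define c1 where "c1 = (1 - \<theta>) * (1 - \<alpha>)"
  define c2 where "c2 = \<theta> * (1 - \<beta>)"
  define c3 where "c3 = (1 - \<theta>) * \<alpha>"
  define c4 where "c4 = \<theta> * \<beta>"
  have c_nonneg: "0 \<le> c1" "0 \<le> c2" "0 \<le> c3" "0 \<le> c4"
    using \<theta> \<alpha> \<beta> unfolding c1_def c2_def c3_def c4_def by simp_all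
  have c_sum: "c3 + c4 = 1 - (c1 + c2)"
    unfolding c1_def c2_def c3_def c4_def by (simp add: algebra_simps)
  obtain y0 where y0: "y0 \<in> lower_part g0" and y0_eq: "c1 *\<^sub>R a0 + c2 *\<^sub>R b0 = (c1 + c2) *\<^sub>R y0"
    using convex_weighted_point[OF convex_lower_part a0 b0 c_nonneg(1,2)] by blast
  obtain y1 where y1: "y1 \<in> upper_part g0" and y1_eq: "c3 *\<^sub>R a1 + c4 *\<^sub>R b1 = (c3 + c4) *\<^sub>R y1"
    using convex_weighted_point[OF convex_upper_part a1 b1 c_nonneg(3,4)] by blast
  have "x = (c1 *\<^sub>R a0 + c2 *\<^sub>R b0) + (c3 *\<^sub>R a1 + c4 *\<^sub>R b1)"
    unfolding x\<theta> a_split b_split c1_def c2_def c3_def c4_def by (simp add: algebra_simps)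
  then have "(1 - u) *\<^sub>R unit_at g0 + u *\<^sub>R v = (c1 + c2) *\<^sub>R y0 + (1 - (c1 + c2)) *\<^sub>R y1"
    using xu y0_eq y1_eq c_sum by simp
  note unique = segment_point_split[OF v ne u_pos _ y0 y1 this]
  have s_le: "c1 + c2 \<le> 1" using c_sum c_nonneg by linarith
  have lower_eq: "(1 - \<alpha>) *\<^sub>R a0 = (1 - \<alpha>) *\<^sub>R v"
  proof (cases "\<alpha> = 1")
    case False
    then have "0 < c1" using \<theta> \<alpha> unfolding c1_def by simp
    moreover have "c1 *\<^sub>R a0 + c2 *\<^sub>R b0 = (c1 + c2) *\<^sub>R v" using y0_eq unique(2)[OF s_le] by simp
    ultimately have "a0 = v" using extreme_point_weighted[OF v in_P(1,2)] c_nonneg by blast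
    then show ?thesis by simp
  qed simp
  have upper_eq: "\<alpha> *\<^sub>R a1 = \<alpha> *\<^sub>R unit_at g0"
  proof (cases "\<alpha> = 0")
    case False
    then have "0 < c3" using \<theta> \<alpha> unfolding c3_def by simp
    then have "c1 + c2 < 1" using c_sum c_nonneg by linarith
    then have "c3 *\<^sub>R a1 + c4 *\<^sub>R b1 = (c3 + c4) *\<^sub>R unit_at g0" using y1_eq unique(3) s_le by simp
    then have "a1 = unit_at g0"
      using extreme_point_weighted[OF unit_at_extreme in_P(3,4)] \<open>0 < c3\<close> c_nonneg by blast
    then show ?thesis by simp
  qed simp
  have "a = (1 - (1 - \<alpha>)) *\<^sub>R unit_at g0 + (1 - \<alpha>) *\<^sub>R v"
    using a_split lower_eq upper_eq by (simp add: add.commute)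
  then show ?thesis using \<alpha> unfolding in_segment by (intro exI[of _ "1 - \<alpha>"]) auto
qed

lemma segment_face:
  assumes v: "v extreme_point_of master_corner g0" and ne: "v \<noteq> unit_at g0"
  shows "closed_segment (unit_at g0) v face_of master_corner g0"
  unfolding face_of_def
proof (intro conjI ballI impI)
  have "v \<in> master_corner g0" using v by (simp add: extreme_point_of_def)
  then show "closed_segment (unit_at g0) v \<subseteq> master_corner g0"
    by (rule closed_segment_subset[OF unit_at_master_corner _ convex_master_corner])
  show "convex (closed_segment (unit_at g0) v)" by simp
  fix a b x assume a: "a \<in> master_corner g0" and b: "b \<in> master_corner g0"
    and x: "x \<in> closed_segment (unit_at g0) v" and x_ab: "x \<in> open_segment a b"
  show "a \<in> closed_segment (unit_at g0) v" by (rule segment_absorbs[OF v ne a b x x_ab])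
  have "x \<in> open_segment b a" using x_ab by (simp add: open_segment_commute)
  then show "b \<in> closed_segment (unit_at g0) v" by (rule segment_absorbs[OF v ne b a x])
qed

end

theorem corollary4:
  fixes g0 :: "'a::{ab_group_add,finite}"
  assumes "g0 \<noteq> 0"
  shows "unit_at g0 extreme_point_of master_corner g0 \<and>
    (\<forall>v. v extreme_point_of master_corner g0 \<and> v \<noteq> unit_at g0 \<longrightarrow>
         adjacent_vertices (master_corner g0) (unit_at g0) v)"
proof (intro conjI allI impI)
  show s0: "unit_at g0 extreme_point_of master_corner g0"
    by (rule unit_at_extreme[OF assms])
  fix v assume "v extreme_point_of master_corner g0 \<and> v \<noteq> unit_at g0"
  then have v: "v extreme_point_of master_corner g0" and ne: "v \<noteq> unit_at g0" by auto
  have "aff_dim (closed_segment (unit_at g0) v) = 1"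
    using ne by (simp add: segment_convex_hull aff_dim_convex_hull)
  then show "adjacent_vertices (master_corner g0) (unit_at g0) v"
    unfolding adjacent_vertices_def using s0 v segment_face[OF assms v ne] by simp
qed

end
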